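(* Let $\varepsilon$ be a real random variable with distribution $\mu_\varepsilon$, and suppose there are $z_0\in\mathbb{R}$ and $t>0$ such that $P(\varepsilon\in\{z_0+tz:z\in\mathbb{N}_0\})=1$ and $F_\varepsilon\{z_0\}>0$. Let $\lambda_{z_0}:=(F_\varepsilon\{z_0\})^{-1}$ and $\ddot u_{\varepsilon,+}(z):=\delta_{z,0}-\lambda_{z_0}F_\varepsilon\{z_0+tz\}$ for $z\in\mathbb{Z}$. Let $A\in\mathcal{B}(\mathbb{R})$ and $m_{t,A}:=\max\{a: a\in\mathbb{Z}\cap t^{-1}A\}$ (with $m_{t,A}:=-\infty$ if $\mathbb{Z}\cap t^{-1}A=\emptyset$), and suppose $m_{t,A}<\infty$. Then $$\sup_{m\in\mathbb{N}_0}|\Pi\{\delta_{\{-z_0\}}\}|(A,m)<\infty,$$ and for each fixed $m_0\in\mathbb{N}_0$ with $m_0\ge m_{t,A}$, $$\lim_{m\to\infty}\Pi\{\delta_{\{-z_0\}}\}(A,m)=\lambda_{z_0}\,\Pi\{\lambda_{z_0}\delta_{\{-z_0\}}\}(A,m_0)=\lambda_{z_0}\sum_{z=0}^\infty\gamma\{\ddot u_{\varepsilon,+}\}(z)\,\delta_{\{tz\}}(A).$$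
   Context: $F_\varepsilon\{x\}:=P(\varepsilon=x)$. $\delta_{\{x\}}$ is the Dirac measure at $x$ and $\delta_{z,0}=1$ if $z=0$, else $0$. For finite complex Borel measures $\mu,\nu$ on $\mathbb{R}$, $(\mu*\nu)(B):=\int\int\mathbf 1_B(x+y)\nu(dx)\mu(dy)$; $\mu^{*0}:=\delta_{\{0\}}$, $\mu^{*j}:=\mu*\mu^{*(j-1)}$. For a finite complex Borel measure $\eta$ on $\mathbb{R}$, set $\pi_{\eta*\mu_\varepsilon}:=\delta_{\{0\}}-\eta*\mu_\varepsilon$ and $\Pi\{\eta\}(B,m):=\sum_{\ell=0}^m\pi_{\eta*\mu_\varepsilon}^{*\ell}(B)$ for $B\in\mathcal{B}(\mathbb{R})$, $m\in\mathbb{N}_0$; $|\Pi\{\eta\}|(A,m)$ denotes the total variation on $A$ of the complex measure $\Pi\{\eta\}(\cdot,m)$. Discrete convolution powers: $\ddot u^{*0}(z):=\delta_{z,0}$, $\ddot u^{*j}(z):=\sum_{y\in\mathbb{Z}}\ddot u(z-y)\ddot u^{*(j-1)}(y)$; $\gamma\{\ddot u\}(z):=\sum_{j=0}^{z}\ddot u^{*j}(z)$ for $z\in\mathbb{Z}$ (empty sum $=0$). *)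

theory Defs
  imports "HOL-Probability.Probability"
begin

text \<open>Finite complex Borel measures on the reals are represented as finite linear
combinations  \<Sum> c_k M_k  of finite Borel measures M_k on the reals (every finite
complex Borel measure has such a representation, e.g. with four terms coming from
the Jordan decompositions of its real and imaginary parts).\<close>

type_synonym cmeas = "(complex \<times> real measure) list"

definition cm_val :: "cmeas \<Rightarrow> real set \<Rightarrow> complex" where
  "cm_val \<nu> B = (\<Sum>(c, M)\<leftarrow>\<nu>. c * complex_of_real (measure M B))"

definition cm_dirac :: "real \<Rightarrow> cmeas" where
  "cm_dirac x = [(1, return borel x)]"

definition cm_scale :: "complex \<Rightarrow> cmeas \<Rightarrow> cmeas" where
  "cm_scale a \<nu> = map (\<lambda>(c, M). (a * c, M)) \<nu>"

definition cm_minus :: "cmeas \<Rightarrow> cmeas \<Rightarrow> cmeas" where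
  "cm_minus \<mu> \<nu> = \<mu> @ cm_scale (-1) \<nu>"

definition cm_conv :: "cmeas \<Rightarrow> cmeas \<Rightarrow> cmeas" where
  "cm_conv \<mu> \<nu> = concat (map (\<lambda>(c, M). map (\<lambda>(d, N). (c * d, M \<star> N)) \<nu>) \<mu>)"

fun cm_pow :: "cmeas \<Rightarrow> nat \<Rightarrow> cmeas" where
  "cm_pow \<mu> 0 = cm_dirac 0"
| "cm_pow \<mu> (Suc j) = cm_conv \<mu> (cm_pow \<mu> j)"

definition pi_meas :: "cmeas \<Rightarrow> real measure \<Rightarrow> cmeas" where
  "pi_meas \<eta> \<mu>\<epsilon> = cm_minus (cm_dirac 0) (cm_conv \<eta> [(1, \<mu>\<epsilon>)])"

definition Pi_meas :: "cmeas \<Rightarrow> real measure \<Rightarrow> real set \<Rightarrow> nat \<Rightarrow> complex" where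
  "Pi_meas \<eta> \<mu>\<epsilon> B m = (\<Sum>l\<le>m. cm_val (cm_pow (pi_meas \<eta> \<mu>\<epsilon>) l) B)"

definition total_variation :: "(real set \<Rightarrow> complex) \<Rightarrow> real set \<Rightarrow> ennreal" where
  "total_variation f A =
     (SUP B \<in> {B :: nat \<Rightarrow> real set. disjoint_family B \<and> range B \<subseteq> sets borel \<and> (\<Union>i. B i) = A}.
        (\<Sum>i. ennreal (cmod (f (B i)))))"

fun dconv_pow :: "(int \<Rightarrow> real) \<Rightarrow> nat \<Rightarrow> int \<Rightarrow> real" where
  "dconv_pow u 0 z = (if z = 0 then 1 else 0)"
| "dconv_pow u (Suc j) z = (\<Sum>\<^sub>\<infinity>y::int. u (z - y) * dconv_pow u j y)"

definition gamma_seq :: "(int \<Rightarrow> real) \<Rightarrow> int \<Rightarrow> real" where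
  "gamma_seq u z = (if z < 0 then 0 else (\<Sum>j\<in>{0..nat z}. dconv_pow u j z))"

text \<open>m_{t,A} = max (Z \<inter> t^{-1} A), -infinity if empty, +infinity if unbounded.\<close>
definition m_tA :: "real \<Rightarrow> real set \<Rightarrow> ereal" where
  "m_tA t A = Sup ((\<lambda>a. ereal (real_of_int a)) ` {a::int. t * real_of_int a \<in> A})"

end

(* Shifting by -z0 turns the distribution of eps into the lattice measure sum_k p_k delta_(t k)
   with p_k = F{z0 + t k}. For combinations of lattice measures with summable weights,
   convolution becomes multiplication of generating functions, so Pi{eta}(B, m) is a finite sum,
   over the lattice points of B, of coefficients of sum_(l <= m) (1 - G)^l, where G is the
   generating function of the shifted eta * mu_eps. For eta = delta_(-z0) we have G = sum_k p_k X^k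
   with |1 - p_0| < 1, so these coefficients are absolutely summable in l, which bounds the total
   variation, and their sums are the coefficients of 1/G. With lambda = 1/p_0 the series
   1 - lambda G has no constant term, so the k-th coefficient of 1/G = lambda sum_l (1 - lambda G)^l
   only involves l <= k; this yields both the truncated expression for m0 >= m_(t,A) and the
   series in gamma{u}. *)

theory Submission
  imports Defs "HOL-Computational_Algebra.Formal_Power_Series"
begin

unbundle no vec_syntax
unbundle fps_syntax

section \<open>Measures on a lattice\<close>

lemma suminf_ennreal_swap:
  fixes f :: "nat \<Rightarrow> nat \<Rightarrow> ennreal"
  shows "(\<Sum>i. \<Sum>j. f i j) = (\<Sum>j. \<Sum>i. f i j)"
proof -
  have "(\<Sum>i. \<Sum>j. f i j) = (\<Sum>i. \<integral>\<^sup>+j. f i j \<partial>count_space UNIV)"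
    by (simp add: nn_integral_count_space_nat)
  also have "\<dots> = (\<integral>\<^sup>+j. (\<Sum>i. f i j) \<partial>count_space UNIV)"
    by (rule nn_integral_suminf[symmetric]) simp
  also have "\<dots> = (\<Sum>j. \<Sum>i. f i j)"
    by (simp add: nn_integral_count_space_nat)
  finally show ?thesis .
qed

lemma suminf_ennreal_Cauchy_product:
  fixes a b g :: "nat \<Rightarrow> ennreal"
  shows "(\<Sum>i. a i * (\<Sum>j. b j * g (i + j))) = (\<Sum>n. (\<Sum>i\<le>n. a i * b (n - i)) * g n)"
proof -
  have shift: "(\<Sum>j. a i * b j * g (i + j)) = (\<Sum>n. if i \<le> n then a i * b (n - i) * g n else 0)" for i
  proof -
    have "(\<Sum>n. if i \<le> n then a i * b (n - i) * g n else 0)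
        = (\<Sum>j. if i \<le> j + i then a i * b (j + i - i) * g (j + i) else 0)
          + (\<Sum>n<i. if i \<le> n then a i * b (n - i) * g n else 0)"
      by (rule suminf_offset) simp
    then show ?thesis
      by (simp add: add.commute)
  qed
  have finite_inner: "(\<Sum>i. if i \<le> n then a i * b (n - i) * g n else 0) = (\<Sum>i\<le>n. a i * b (n - i) * g n)" for n
    by (subst suminf_finite[of "{..n}"]) auto
  have "(\<Sum>i. a i * (\<Sum>j. b j * g (i + j))) = (\<Sum>i. \<Sum>j. a i * b j * g (i + j))"
    by (simp add: mult.assoc)
  also have "\<dots> = (\<Sum>i. \<Sum>n. if i \<le> n then a i * b (n - i) * g n else 0)"
    by (simp only: shift)
  also have "\<dots> = (\<Sum>n. \<Sum>i. if i \<le> n then a i * b (n - i) * g n else 0)"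
    by (rule suminf_ennreal_swap)
  also have "\<dots> = (\<Sum>n. (\<Sum>i\<le>n. a i * b (n - i)) * g n)"
    by (simp only: finite_inner sum_distrib_right)
  finally show ?thesis .
qed

definition lattice_measure :: "real \<Rightarrow> (nat \<Rightarrow> real) \<Rightarrow> real measure" where
  "lattice_measure t a = distr (density (count_space UNIV) (\<lambda>k. ennreal (a k))) borel (\<lambda>k. t * real k)"

lemma sets_lattice_measure [simp, measurable_cong]: "sets (lattice_measure t a) = sets borel"
  by (simp add: lattice_measure_def)

lemma space_lattice_measure [simp]: "space (lattice_measure t a) = UNIV"
  by (simp add: lattice_measure_def)

lemma nn_integral_lattice_measure:
  assumes [measurable]: "f \<in> borel_measurable borel"
  shows "(\<integral>\<^sup>+x. f x \<partial>lattice_measure t a) = (\<Sum>k. ennreal (a k) * f (t * real k))"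
  unfolding lattice_measure_def
  by (simp add: nn_integral_distr nn_integral_density nn_integral_count_space_nat)

lemma emeasure_lattice_measure:
  assumes [measurable]: "B \<in> sets borel"
  shows "emeasure (lattice_measure t a) B = (\<Sum>k. ennreal (a k) * indicator B (t * real k))"
  using nn_integral_lattice_measure[of "indicator B" t a] by simp

lemma finite_measure_lattice_measure:
  assumes "\<And>k. 0 \<le> a k" "summable a"
  shows "finite_measure (lattice_measure t a)"
proof (rule finite_measureI)
  show "emeasure (lattice_measure t a) (space (lattice_measure t a)) \<noteq> \<infinity>"
    using emeasure_lattice_measure[of UNIV t a] ennreal_suminf_neq_top[OF assms(2,1)] by simp
qed

lemma measure_lattice_measure:
  assumes "t \<noteq> 0" "\<And>k. 0 \<le> a k" "B \<in> sets borel" "finite K" "{k. t * real k \<in> B} \<subseteq> K"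
  shows "measure (lattice_measure t a) B = (\<Sum>k\<in>K. a k * indicator B (t * real k))"
proof -
  have "emeasure (lattice_measure t a) B = (\<Sum>k\<in>K. ennreal (a k) * indicator B (t * real k))"
    unfolding emeasure_lattice_measure[OF assms(3)]
    by (rule suminf_finite) (use assms in \<open>auto simp: indicator_def\<close>)
  also have "\<dots> = ennreal (\<Sum>k\<in>K. a k * indicator B (t * real k))"
    using assms(2) by (subst sum_ennreal[symmetric]) (auto simp: ennreal_mult ennreal_indicator)
  finally show ?thesis
    using assms(2) by (simp add: measure_def sum_nonneg)
qed

lemma measure_lattice_measure_point:
  assumes "t \<noteq> 0" "\<And>k. 0 \<le> a k"
  shows "measure (lattice_measure t a) {t * real k} = a k"
  using measure_lattice_measure[of t a "{t * real k}" "{k}"] assms by auto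

lemma return_0_eq_lattice_measure: "return borel 0 = lattice_measure t (\<lambda>k. if k = 0 then 1 else 0)"
proof (rule measure_eqI)
  fix B assume "B \<in> sets (return borel (0::real))"
  then have "B \<in> sets borel" by simp
  have "emeasure (lattice_measure t (\<lambda>k. if k = 0 then 1 else 0)) B
      = (\<Sum>k\<in>{0}. ennreal (if k = 0 then 1 else 0) * indicator B (t * real k))"
    unfolding emeasure_lattice_measure[OF \<open>B \<in> sets borel\<close>] by (rule suminf_finite) auto
  with \<open>B \<in> sets borel\<close>
  show "emeasure (return borel 0) B = emeasure (lattice_measure t (\<lambda>k. if k = 0 then 1 else 0)) B"
    by simp
qed simp

lemma lattice_measure_convolution:
  assumes "\<And>k. 0 \<le> a k" "summable a" "\<And>k. 0 \<le> b k" "summable b"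
  shows "lattice_measure t a \<star> lattice_measure t b = lattice_measure t (\<lambda>n. \<Sum>i\<le>n. a i * b (n - i))"
proof (rule measure_eqI)
  fix B assume "B \<in> sets (lattice_measure t a \<star> lattice_measure t b)"
  then have B[measurable]: "B \<in> sets borel" by simp
  have "emeasure (lattice_measure t a \<star> lattice_measure t b) B
      = \<integral>\<^sup>+x. \<integral>\<^sup>+y. indicator B (x + y) \<partial>lattice_measure t b \<partial>lattice_measure t a"
    by (rule convolution_emeasure') (auto intro: finite_measure_lattice_measure assms)
  also have "\<dots> = (\<Sum>i. ennreal (a i) * (\<Sum>j. ennreal (b j) * indicator B (t * real i + t * real j)))"
    by (simp add: nn_integral_lattice_measure)
  also have "\<dots> = (\<Sum>i. ennreal (a i) * (\<Sum>j. ennreal (b j) * indicator B (t * real (i + j))))"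
    by (simp add: distrib_left)
  also have "\<dots> = (\<Sum>n. (\<Sum>i\<le>n. ennreal (a i) * ennreal (b (n - i))) * indicator B (t * real n))"
    by (rule suminf_ennreal_Cauchy_product)
  also have "\<dots> = (\<Sum>n. ennreal (\<Sum>i\<le>n. a i * b (n - i)) * indicator B (t * real n))"
    using assms by (simp add: ennreal_mult flip: sum_ennreal)
  also have "\<dots> = emeasure (lattice_measure t (\<lambda>n. \<Sum>i\<le>n. a i * b (n - i))) B"
    by (simp add: emeasure_lattice_measure)
  finally show "emeasure (lattice_measure t a \<star> lattice_measure t b) B
      = emeasure (lattice_measure t (\<lambda>n. \<Sum>i\<le>n. a i * b (n - i))) B" .
qed simp

lemma convolution_return:
  assumes "finite_measure M" and [measurable_cong]: "sets M = sets borel"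
  shows "return borel x \<star> M = distr M borel (\<lambda>y. x + y)"
proof (rule measure_eqI)
  fix B assume "B \<in> sets (return borel x \<star> M)"
  then have [measurable]: "B \<in> sets borel" by simp
  have return_finite: "finite_measure (return borel x)"
    by (rule finite_measureI) simp
  have "emeasure (return borel x \<star> M) B = emeasure (M \<star> return borel x) B"
    using convolution_commutative[OF return_finite assms] by simp
  also have "\<dots> = \<integral>\<^sup>+y. \<integral>\<^sup>+z. indicator B (y + z) \<partial>return borel x \<partial>M"
    using assms return_finite by (intro convolution_emeasure') auto
  also have "\<dots> = \<integral>\<^sup>+y. indicator B (x + y) \<partial>M"
    by (intro nn_integral_cong) (simp add: nn_integral_return add.commute)
  also have "\<dots> = emeasure (distr M borel (\<lambda>y. x + y)) B"
    by (simp add: nn_integral_distr flip: nn_integral_indicator)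
  finally show "emeasure (return borel x \<star> M) B = emeasure (distr M borel (\<lambda>y. x + y)) B" .
qed simp

lemma distr_eq_lattice_measure:
  assumes "finite_measure M" and [measurable]: "X \<in> borel_measurable M" and "t \<noteq> 0"
    and lattice: "AE x in M. X x \<in> range (\<lambda>k. t * real k)"
  shows "distr M borel X = lattice_measure t (\<lambda>k. measure M (X -` {t * real k} \<inter> space M))"
proof (rule measure_eqI)
  interpret finite_measure M by fact
  fix B assume "B \<in> sets (distr M borel X)"
  then have [measurable]: "B \<in> sets borel" by simp
  have unique_point: "(\<Sum>k. indicator B (t * real k) * indicator (X -` {t * real k} \<inter> space M) x)
      = (indicator B (X x) :: ennreal)" if "x \<in> space M" "X x = t * real k\<^sub>0" for x k\<^sub>0
  proof -
    have "X x = t * real k \<longleftrightarrow> k = k\<^sub>0" for k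
      using that(2) \<open>t \<noteq> 0\<close> by auto
    then have "(\<Sum>k. indicator B (t * real k) * indicator (X -` {t * real k} \<inter> space M) x)
        = (\<Sum>k\<in>{k\<^sub>0}. indicator B (t * real k) * indicator (X -` {t * real k} \<inter> space M) x :: ennreal)"
      by (intro suminf_finite) (auto simp: indicator_def)
    then show ?thesis
      using that by (simp add: indicator_def)
  qed
  have "emeasure (distr M borel X) B = \<integral>\<^sup>+x. indicator B (X x) \<partial>M"
    by (simp add: nn_integral_distr flip: nn_integral_indicator)
  also have "\<dots>
      = \<integral>\<^sup>+x. (\<Sum>k. indicator B (t * real k) * indicator (X -` {t * real k} \<inter> space M) x) \<partial>M"
  proof (rule nn_integral_cong_AE)
    show "AE x in M. indicator B (X x)
        = (\<Sum>k. indicator B (t * real k) * indicator (X -` {t * real k} \<inter> space M) x :: ennreal)"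
      using lattice AE_space
    proof eventually_elim
      case (elim x)
      then obtain k\<^sub>0 where "X x = t * real k\<^sub>0" by blast
      with elim(2) show ?case by (rule unique_point[symmetric])
    qed
  qed
  also have "\<dots> = (\<Sum>k. indicator B (t * real k) * emeasure M (X -` {t * real k} \<inter> space M))"
    by (simp add: nn_integral_suminf nn_integral_cmult_indicator)
  also have "\<dots> = emeasure (lattice_measure t (\<lambda>k. measure M (X -` {t * real k} \<inter> space M))) B"
    by (simp add: emeasure_lattice_measure emeasure_eq_measure mult.commute)
  finally show "emeasure (distr M borel X) B
      = emeasure (lattice_measure t (\<lambda>k. measure M (X -` {t * real k} \<inter> space M))) B" .
qed simp

lemma shifted_measure_eq_lattice_measure:
  assumes "finite_measure \<mu>" "sets \<mu> = sets borel" "t \<noteq> 0"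
    and "AE x in \<mu>. x \<in> {z\<^sub>0 + t * real k | k. True}"
  shows "return borel (- z\<^sub>0) \<star> \<mu> = lattice_measure t (\<lambda>k. measure \<mu> {z\<^sub>0 + t * real k})"
proof -
  have preimage: "(\<lambda>x. - z\<^sub>0 + x) -` {t * real k} \<inter> space \<mu> = {z\<^sub>0 + t * real k}" for k
    using sets_eq_imp_space_eq[OF assms(2)] by auto
  have "AE x in \<mu>. - z\<^sub>0 + x \<in> range (\<lambda>k. t * real k)"
    using assms(4) by eventually_elim auto
  then have "distr \<mu> borel (\<lambda>x. - z\<^sub>0 + x)
      = lattice_measure t (\<lambda>k. measure \<mu> ((\<lambda>x. - z\<^sub>0 + x) -` {t * real k} \<inter> space \<mu>))"
    using assms(1-3) by (intro distr_eq_lattice_measure) simp_all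
  then show ?thesis
    using assms(1,2) by (simp only: preimage convolution_return)
qed

lemma measure_singleton_eq_0_if_AE:
  assumes "AE x in M. P x" "\<not> P y" "{y} \<in> sets M"
  shows "measure M {y} = 0"
proof -
  have "AE x in M. x \<notin> {y}"
    using assms(1) by eventually_elim (use assms(2) in auto)
  then have "{y} \<in> null_sets M"
    using AE_iff_null_sets[OF assms(3)] by simp
  then show ?thesis
    by (simp add: measure_def null_setsD1)
qed

lemma sets_borel_lattice: "{a + t * real k | k. True} \<in> sets borel"
proof (rule sets.countable)
  have "{a + t * real k | k. True} = range (\<lambda>k. a + t * real k)"
    by auto
  then show "countable {a + t * real k | k. True}"
    by simp
qed simp

lemma summable_measure_lattice_points:
  assumes "finite_measure \<mu>" "sets \<mu> = sets borel" "t \<noteq> 0"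
  shows "summable (\<lambda>k. measure \<mu> {z\<^sub>0 + t * real k})"
proof -
  interpret finite_measure \<mu> by fact
  have "range (\<lambda>k. {z\<^sub>0 + t * real k}) \<subseteq> sets \<mu>"
    by (auto simp: assms(2))
  moreover have "disjoint_family (\<lambda>k. {z\<^sub>0 + t * real k})"
    using assms(3) by (auto simp: disjoint_family_on_def)
  moreover have "emeasure \<mu> (\<Union>k. {z\<^sub>0 + t * real k}) \<noteq> \<infinity>"
    using emeasure_finite by simp
  ultimately have "(\<lambda>k. measure \<mu> {z\<^sub>0 + t * real k}) sums measure \<mu> (\<Union>k. {z\<^sub>0 + t * real k})"
    by (rule measure_UNION)
  then show ?thesis
    by (rule sums_summable)
qed

lemma
  fixes P :: "'a measure" and \<epsilon> :: "'a \<Rightarrow> real"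
  assumes "prob_space P" "\<epsilon> \<in> borel_measurable P" "t \<noteq> 0"
    and "measure P {\<omega> \<in> space P. \<epsilon> \<omega> \<in> {z\<^sub>0 + t * real z | z. True}} = 1"
  defines "\<mu> \<equiv> distr P borel \<epsilon>"
  shows shifted_distr_eq_lattice_measure:
      "return borel (- z\<^sub>0) \<star> \<mu> = lattice_measure t (\<lambda>k. measure \<mu> {z\<^sub>0 + t * real k})"
    and summable_distr_lattice_points: "summable (\<lambda>k. measure \<mu> {z\<^sub>0 + t * real k})"
    and measure_distr_below_lattice: "z < 0 \<Longrightarrow> measure \<mu> {z\<^sub>0 + t * real_of_int z} = 0"
proof -
  interpret prob_space P by fact
  have \<mu>: "finite_measure \<mu>" "sets \<mu> = sets borel"
    using assms(2) by (simp_all add: \<mu>_def finite_measure_distr)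
  have "AE \<omega> in P. \<epsilon> \<omega> \<in> {z\<^sub>0 + t * real z | z. True}"
    using AE_prob_1[OF assms(4)] by eventually_elim simp
  then have lattice: "AE x in \<mu>. x \<in> {z\<^sub>0 + t * real z | z. True}"
    using assms(2) sets_borel_lattice unfolding \<mu>_def by (subst AE_distr_iff) simp_all
  show "return borel (- z\<^sub>0) \<star> \<mu> = lattice_measure t (\<lambda>k. measure \<mu> {z\<^sub>0 + t * real k})"
    by (rule shifted_measure_eq_lattice_measure[OF \<mu> assms(3) lattice])
  show "summable (\<lambda>k. measure \<mu> {z\<^sub>0 + t * real k})"
    by (rule summable_measure_lattice_points[OF \<mu> assms(3)])
  show "measure \<mu> {z\<^sub>0 + t * real_of_int z} = 0" if "z < 0"
    using measure_singleton_eq_0_if_AE[OF lattice] that assms(3) \<mu>(2) by auto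
qed

section \<open>Generating functions of complex lattice measures\<close>

definition on_lattice :: "real \<Rightarrow> cmeas \<Rightarrow> bool" where
  "on_lattice t \<nu> \<longleftrightarrow>
     (\<forall>M \<in> snd ` set \<nu>. \<exists>a. (\<forall>k. 0 \<le> a k) \<and> summable a \<and> M = lattice_measure t a)"

definition lattice_fps :: "real \<Rightarrow> cmeas \<Rightarrow> complex fps" where
  "lattice_fps t \<nu> = Abs_fps (\<lambda>k. cm_val \<nu> {t * real k})"

definition weights_fps :: "(nat \<Rightarrow> real) \<Rightarrow> complex fps" where
  "weights_fps a = Abs_fps (\<lambda>k. of_real (a k))"

lemma cm_val_Nil [simp]: "cm_val [] B = 0"
  by (simp add: cm_val_def)

lemma cm_val_Cons [simp]: "cm_val ((c, M) # \<nu>) B = c * of_real (measure M B) + cm_val \<nu> B"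
  by (simp add: cm_val_def)

lemma cm_val_append [simp]: "cm_val (\<mu> @ \<nu>) B = cm_val \<mu> B + cm_val \<nu> B"
  by (simp add: cm_val_def)

lemma cm_val_cm_scale [simp]: "cm_val (cm_scale c \<nu>) B = c * cm_val \<nu> B"
  by (induction \<nu>) (auto simp: cm_scale_def algebra_simps)

lemma cm_scale_1 [simp]: "cm_scale 1 \<nu> = \<nu>"
  by (induction \<nu>) (auto simp: cm_scale_def)

lemma on_lattice_Nil [simp]: "on_lattice t []"
  by (simp add: on_lattice_def)

lemma on_lattice_Cons [simp]:
  "on_lattice t ((c, M) # \<nu>) \<longleftrightarrow>
     (\<exists>a. (\<forall>k. 0 \<le> a k) \<and> summable a \<and> M = lattice_measure t a) \<and> on_lattice t \<nu>"
  by (simp add: on_lattice_def)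

lemma on_lattice_append [simp]: "on_lattice t (\<mu> @ \<nu>) \<longleftrightarrow> on_lattice t \<mu> \<and> on_lattice t \<nu>"
  by (auto simp: on_lattice_def)

lemma on_lattice_cm_scale [simp]: "on_lattice t (cm_scale c \<nu>) \<longleftrightarrow> on_lattice t \<nu>"
proof -
  have "snd ` set (cm_scale c \<nu>) = snd ` set \<nu>"
    by (simp add: cm_scale_def image_image case_prod_beta)
  then show ?thesis
    by (simp add: on_lattice_def)
qed

lemma lattice_fps_Nil [simp]: "lattice_fps t [] = 0"
  by (simp add: lattice_fps_def fps_ext)

lemma lattice_fps_Cons:
  assumes "t \<noteq> 0" "\<And>k. 0 \<le> a k"
  shows "lattice_fps t ((c, lattice_measure t a) # \<nu>) = fps_const c * weights_fps a + lattice_fps t \<nu>"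
  using assms by (simp add: lattice_fps_def weights_fps_def fps_ext measure_lattice_measure_point)

lemma lattice_fps_append [simp]: "lattice_fps t (\<mu> @ \<nu>) = lattice_fps t \<mu> + lattice_fps t \<nu>"
  by (simp add: lattice_fps_def fps_ext)

lemma lattice_fps_cm_scale [simp]: "lattice_fps t (cm_scale c \<nu>) = fps_const c * lattice_fps t \<nu>"
  by (simp add: lattice_fps_def fps_ext)

lemma weights_fps_Cauchy_product:
  "weights_fps (\<lambda>n. \<Sum>i\<le>n. a i * b (n - i)) = weights_fps a * weights_fps b"
  by (simp add: weights_fps_def fps_ext fps_mult_nth atLeast0AtMost)

lemma on_lattice_dirac_0 [simp]: "on_lattice t (cm_dirac 0)"
proof -
  have "summable (\<lambda>k::nat. if k = 0 then 1 else 0 :: real)"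
    by (rule summable_If_finite) simp
  then show ?thesis
    unfolding cm_dirac_def return_0_eq_lattice_measure[of t] on_lattice_Cons
    by (intro conjI exI[of _ "\<lambda>k. if k = 0 then 1 else 0"]) simp_all
qed

lemma lattice_fps_dirac_0 [simp]: "t \<noteq> 0 \<Longrightarrow> lattice_fps t (cm_dirac 0) = 1"
  unfolding cm_dirac_def return_0_eq_lattice_measure[of t]
  by (subst lattice_fps_Cons) (auto simp: weights_fps_def fps_ext)

lemma cm_conv_Nil [simp]: "cm_conv [] \<nu> = []"
  by (simp add: cm_conv_def)

lemma cm_conv_Cons:
  "cm_conv ((c, M) # \<mu>) \<nu> = map (\<lambda>(d, N). (c * d, M \<star> N)) \<nu> @ cm_conv \<mu> \<nu>"
  by (simp add: cm_conv_def)

lemma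
  assumes "t \<noteq> 0" "on_lattice t \<nu>" "\<And>k. 0 \<le> a k" "summable a"
  shows on_lattice_map_convolution: "on_lattice t (map (\<lambda>(d, N). (c * d, lattice_measure t a \<star> N)) \<nu>)"
    and lattice_fps_map_convolution:
      "lattice_fps t (map (\<lambda>(d, N). (c * d, lattice_measure t a \<star> N)) \<nu>)
         = fps_const c * weights_fps a * lattice_fps t \<nu>"
proof -
  let ?conv = "\<lambda>(d, N). (c * d, lattice_measure t a \<star> N)"
  have "on_lattice t (map ?conv \<nu>) \<and> lattice_fps t (map ?conv \<nu>) = fps_const c * weights_fps a * lattice_fps t \<nu>"
    using assms(2)
  proof (induction \<nu>)
    case (Cons dN \<nu>)
    obtain d b where dN: "dN = (d, lattice_measure t b)" and b: "\<And>k. 0 \<le> b k" "summable b"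
      and \<nu>: "on_lattice t \<nu>"
      using Cons.prems by (cases dN) auto
    define ab where "ab = (\<lambda>n. \<Sum>i\<le>n. a i * b (n - i))"
    have ab: "\<And>n. 0 \<le> ab n" "summable ab"
      using assms(3,4) b summable_Cauchy_product[of a b] by (auto simp: ab_def intro!: sum_nonneg)
    have map_eq: "map ?conv (dN # \<nu>) = (c * d, lattice_measure t ab) # map ?conv \<nu>"
      using assms(3,4) b by (simp add: dN ab_def lattice_measure_convolution)
    have ab_fps: "weights_fps ab = weights_fps a * weights_fps b"
      by (simp add: ab_def weights_fps_Cauchy_product)
    have "on_lattice t (map ?conv (dN # \<nu>))"
      unfolding map_eq on_lattice_Cons using ab Cons.IH[OF \<nu>] by blast
    moreover
    have "lattice_fps t (map ?conv (dN # \<nu>))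
        = fps_const (c * d) * weights_fps ab + lattice_fps t (map ?conv \<nu>)"
      by (simp only: map_eq lattice_fps_Cons[OF assms(1) ab(1)])
    then have "lattice_fps t (map ?conv (dN # \<nu>)) = fps_const c * weights_fps a * lattice_fps t (dN # \<nu>)"
      unfolding Cons.IH[OF \<nu>, THEN conjunct2]
      by (simp add: dN ab_fps lattice_fps_Cons[OF assms(1) b(1)] algebra_simps flip: fps_const_mult)
    ultimately show ?case ..
  qed simp
  then show "on_lattice t (map ?conv \<nu>)" "lattice_fps t (map ?conv \<nu>) = fps_const c * weights_fps a * lattice_fps t \<nu>"
    by simp_all
qed

lemma
  assumes "t \<noteq> 0" "on_lattice t \<mu>" "on_lattice t \<nu>"
  shows on_lattice_cm_conv: "on_lattice t (cm_conv \<mu> \<nu>)"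
    and lattice_fps_cm_conv: "lattice_fps t (cm_conv \<mu> \<nu>) = lattice_fps t \<mu> * lattice_fps t \<nu>"
proof -
  have "on_lattice t (cm_conv \<mu> \<nu>) \<and> lattice_fps t (cm_conv \<mu> \<nu>) = lattice_fps t \<mu> * lattice_fps t \<nu>"
    using assms(2)
  proof (induction \<mu>)
    case (Cons cM \<mu>)
    obtain c a where cM: "cM = (c, lattice_measure t a)" and a: "\<And>k. 0 \<le> a k" "summable a"
      and \<mu>: "on_lattice t \<mu>"
      using Cons.prems by (cases cM) auto
    show ?case
      using Cons.IH[OF \<mu>] on_lattice_map_convolution[OF assms(1,3) a]
        lattice_fps_map_convolution[OF assms(1,3) a]
      by (simp add: cM cm_conv_Cons lattice_fps_Cons[OF assms(1) a(1)] distrib_right)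
  qed simp
  then show "on_lattice t (cm_conv \<mu> \<nu>)" "lattice_fps t (cm_conv \<mu> \<nu>) = lattice_fps t \<mu> * lattice_fps t \<nu>"
    by simp_all
qed

lemma
  assumes "t \<noteq> 0" "on_lattice t \<nu>"
  shows on_lattice_cm_pow: "on_lattice t (cm_pow \<nu> l)"
    and lattice_fps_cm_pow: "lattice_fps t (cm_pow \<nu> l) = lattice_fps t \<nu> ^ l"
proof -
  have "on_lattice t (cm_pow \<nu> l) \<and> lattice_fps t (cm_pow \<nu> l) = lattice_fps t \<nu> ^ l"
    by (induction l) (simp_all add: assms on_lattice_cm_conv lattice_fps_cm_conv)
  then show "on_lattice t (cm_pow \<nu> l)" "lattice_fps t (cm_pow \<nu> l) = lattice_fps t \<nu> ^ l"
    by simp_all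
qed

lemma cm_val_eq_lattice_sum:
  assumes "t \<noteq> 0" "on_lattice t \<nu>" "B \<in> sets borel" "finite K" "{k. t * real k \<in> B} \<subseteq> K"
  shows "cm_val \<nu> B = (\<Sum>k\<in>K. lattice_fps t \<nu> $ k * of_real (indicator B (t * real k)))"
  using assms(2)
proof (induction \<nu>)
  case (Cons cM \<nu>)
  obtain c a where cM: "cM = (c, lattice_measure t a)" and a: "\<And>k. 0 \<le> a k" "summable a"
    and \<nu>: "on_lattice t \<nu>"
    using Cons.prems by (cases cM) auto
  have "measure (lattice_measure t a) B = (\<Sum>k\<in>K. a k * indicator B (t * real k))"
    using assms a by (intro measure_lattice_measure) auto
  then have "cm_val (cM # \<nu>) B
      = (\<Sum>k\<in>K. c * of_real (a k) * of_real (indicator B (t * real k)))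
        + (\<Sum>k\<in>K. lattice_fps t \<nu> $ k * of_real (indicator B (t * real k)))"
    by (simp add: cM Cons.IH[OF \<nu>] sum_distrib_left mult.assoc)
  also have "\<dots> = (\<Sum>k\<in>K. lattice_fps t (cM # \<nu>) $ k * of_real (indicator B (t * real k)))"
    by (simp add: cM lattice_fps_Cons[OF assms(1) a(1)] weights_fps_def distrib_right
        flip: sum.distrib)
  finally show ?case .
qed simp

lemma Pi_meas_eq_lattice_sum:
  assumes "t \<noteq> 0" "on_lattice t (pi_meas \<eta> \<mu>)" "B \<in> sets borel" "finite K" "{k. t * real k \<in> B} \<subseteq> K"
  shows "Pi_meas \<eta> \<mu> B m
    = (\<Sum>k\<in>K. (\<Sum>l\<le>m. (lattice_fps t (pi_meas \<eta> \<mu>) ^ l) $ k) * of_real (indicator B (t * real k)))"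
proof -
  have "Pi_meas \<eta> \<mu> B m
      = (\<Sum>l\<le>m. \<Sum>k\<in>K. (lattice_fps t (pi_meas \<eta> \<mu>) ^ l) $ k * of_real (indicator B (t * real k)))"
    unfolding Pi_meas_def
    using assms by (simp add: cm_val_eq_lattice_sum on_lattice_cm_pow lattice_fps_cm_pow)
  then show ?thesis
    by (simp add: sum.swap[of _ K] sum_distrib_right)
qed

lemma
  assumes "t \<noteq> 0" "return borel (- z\<^sub>0) \<star> \<mu> = lattice_measure t p" "\<And>k. 0 \<le> p k" "summable p"
  shows on_lattice_pi_meas_shifted_dirac: "on_lattice t (pi_meas (cm_scale c (cm_dirac (- z\<^sub>0))) \<mu>)"
    and lattice_fps_pi_meas_shifted_dirac:
      "lattice_fps t (pi_meas (cm_scale c (cm_dirac (- z\<^sub>0))) \<mu>) = 1 - fps_const c * weights_fps p"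
proof -
  have pi: "pi_meas (cm_scale c (cm_dirac (- z\<^sub>0))) \<mu> = cm_dirac 0 @ cm_scale (- 1) [(c, lattice_measure t p)]"
    using assms(2) by (simp add: pi_meas_def cm_minus_def cm_conv_def cm_dirac_def cm_scale_def)
  show "on_lattice t (pi_meas (cm_scale c (cm_dirac (- z\<^sub>0))) \<mu>)"
    using assms(3,4) by (auto simp: pi)
  show "lattice_fps t (pi_meas (cm_scale c (cm_dirac (- z\<^sub>0))) \<mu>) = 1 - fps_const c * weights_fps p"
    using assms(1,3) by (simp add: pi lattice_fps_Cons fps_const_neg[symmetric] del: fps_const_neg)
qed

section \<open>Neumann series of formal power series\<close>

lemma summable_if_contracting_recurrence:
  fixes a b :: "nat \<Rightarrow> real"
  assumes "\<And>n. 0 \<le> a n" "\<And>n. 0 \<le> b n" "summable b" "0 \<le> q" "q < 1"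
    and recurrence: "\<And>n. a (Suc n) \<le> q * a n + b n"
  shows "summable a"
proof (rule summableI_nonneg_bounded[where x = "(a 0 + suminf b) / (1 - q)"])
  fix N
  have "(\<Sum>i<Suc N. a i) = a 0 + (\<Sum>i<N. a (Suc i))"
    by (simp only: sum.lessThan_Suc_shift)
  also have "\<dots> \<le> a 0 + (\<Sum>i<N. q * a i + b i)"
    using recurrence by (intro add_left_mono sum_mono) auto
  also have "\<dots> = a 0 + q * (\<Sum>i<N. a i) + (\<Sum>i<N. b i)"
    by (simp add: sum.distrib sum_distrib_left)
  also have "\<dots> \<le> a 0 + q * (\<Sum>i<Suc N. a i) + suminf b"
    using assms by (intro add_mono mult_left_mono sum_le_suminf order_refl) auto
  finally have "(1 - q) * (\<Sum>i<Suc N. a i) \<le> a 0 + suminf b"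
    by (simp add: algebra_simps)
  then have "(\<Sum>i<Suc N. a i) \<le> (a 0 + suminf b) / (1 - q)"
    using assms(5) by (simp add: field_simps)
  moreover have "(\<Sum>i<N. a i) \<le> (\<Sum>i<Suc N. a i)"
    using assms(1) by simp
  ultimately show "(\<Sum>i<N. a i) \<le> (a 0 + suminf b) / (1 - q)"
    by linarith
qed (fact assms(1))

lemma summable_norm_fps_power_nth:
  fixes Q :: "'a::real_normed_algebra_1 fps"
  assumes "norm (Q $ 0) < 1"
  shows "summable (\<lambda>l. norm ((Q ^ l) $ k))"
proof (induction k rule: less_induct)
  case (less k)
  define b where "b l = (\<Sum>i\<in>{0<..k}. norm (Q $ i) * norm ((Q ^ l) $ (k - i)))" for l
  have "summable b"
    unfolding b_def by (intro summable_sum summable_mult less) auto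
  \<comment> \<open>Coefficient \<open>k\<close> of \<open>Q ^ Suc l\<close> is \<open>Q $ 0\<close> times that of \<open>Q ^ l\<close> plus a combination of
    lower coefficients of \<open>Q ^ l\<close>, which are summable in \<open>l\<close> by induction.\<close>
  show ?case
  proof (rule summable_if_contracting_recurrence[where b = b])
    fix l
    have "(Q ^ Suc l) $ k = Q $ 0 * (Q ^ l) $ k + (\<Sum>i\<in>{0<..k}. Q $ i * (Q ^ l) $ (k - i))"
      by (simp add: fps_mult_nth sum.head)
    also have "norm \<dots> \<le> norm (Q $ 0) * norm ((Q ^ l) $ k) + b l"
      unfolding b_def
      by (intro norm_triangle_le add_mono norm_mult_ineq order.trans[OF norm_sum] sum_mono)
    finally show "norm ((Q ^ Suc l) $ k) \<le> norm (Q $ 0) * norm ((Q ^ l) $ k) + b l" .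
  qed (use \<open>summable b\<close> assms in \<open>auto simp: b_def intro: sum_nonneg\<close>)
qed

lemma fps_power_nth_sums_inverse:
  fixes Q :: "'a::{real_normed_field, banach} fps"
  assumes "norm (Q $ 0) < 1"
  shows "(\<lambda>l. (Q ^ l) $ k) sums (inverse (1 - Q) $ k)"
proof -
  have summable: "summable (\<lambda>l. (Q ^ l) $ j)" for j
    by (rule summable_norm_cancel) (rule summable_norm_fps_power_nth[OF assms])
  define S where "S = Abs_fps (\<lambda>j. \<Sum>l. (Q ^ l) $ j)"
  have "(1 - Q) * S = 1"
  proof (rule fps_ext)
    fix n
    have "(\<lambda>m. ((1 - Q) * (\<Sum>l<m. Q ^ l)) $ n) \<longlonglongrightarrow> ((1 - Q) * S) $ n"
      unfolding fps_mult_nth fps_sum_nth S_def fps_nth_Abs_fps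
      by (intro tendsto_sum tendsto_mult tendsto_const summable_LIMSEQ summable)
    moreover have "(\<lambda>m. ((1 - Q) * (\<Sum>l<m. Q ^ l)) $ n) \<longlonglongrightarrow> 1 $ n"
    proof -
      have "(\<lambda>m. 1 $ n - (Q ^ m) $ n) \<longlonglongrightarrow> 1 $ n - 0"
        by (intro tendsto_diff tendsto_const summable_LIMSEQ_zero summable)
      then show ?thesis
        by (simp only: one_diff_power_eq[symmetric] fps_sub_nth diff_zero)
    qed
    ultimately show "((1 - Q) * S) $ n = 1 $ n"
      by (rule LIMSEQ_unique)
  qed
  then have "inverse (1 - Q) = S"
    by (rule fps_inverse_unique)
  then show ?thesis
    using summable_sums[OF summable] by (simp add: S_def)
qed

lemma fps_inverse_nth_eq_truncated_geometric:
  fixes f :: "'a::field fps"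
  defines "R \<equiv> 1 - fps_const (inverse (f $ 0)) * f"
  assumes "f $ 0 \<noteq> 0" "k \<le> m"
  shows "inverse f $ k = inverse (f $ 0) * (\<Sum>l\<le>m. (R ^ l) $ k)"
proof -
  define c where "c = fps_const (inverse (f $ 0))"
  have geometric: "c * f * (\<Sum>l\<le>m. R ^ l) = 1 - R ^ Suc m"
    using one_diff_power_eq[of R "Suc m"] by (simp add: R_def c_def lessThan_Suc_atMost)
  have "inverse f = inverse f * (1 - R ^ Suc m) + inverse f * R ^ Suc m"
    by (simp add: algebra_simps)
  also have "inverse f * (1 - R ^ Suc m) = c * (inverse f * f) * (\<Sum>l\<le>m. R ^ l)"
    by (simp only: geometric[symmetric] ac_simps)
  also have "\<dots> = c * (\<Sum>l\<le>m. R ^ l)"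
    using inverse_mult_eq_1[OF assms(2)] by simp
  finally have "inverse f $ k = (c * (\<Sum>l\<le>m. R ^ l)) $ k + (inverse f * R ^ Suc m) $ k"
    by (metis fps_add_nth)
  moreover have "(inverse f * R ^ Suc m) $ k = 0"
    \<comment> \<open>\<open>R\<close> has no constant term, so \<open>R ^ Suc m\<close> starts at order \<open>m + 1 > k\<close>.\<close>
  proof -
    have "R $ 0 = 0"
      using assms(2) by (simp add: R_def)
    then have "(R ^ Suc m) $ j = 0" if "j \<le> k" for j
      using startsby_zero_power_prefix[OF \<open>R $ 0 = 0\<close>, of "Suc m"] that assms(3)
      by (auto simp del: power_Suc)
    then show ?thesis
      unfolding fps_mult_nth by (intro sum.neutral ballI) (simp del: power_Suc)
  qed
  ultimately show ?thesis
    by (simp add: c_def fps_sum_nth)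
qed

lemma dconv_pow_eq_0_if_neg:
  assumes "\<And>z. z < 0 \<Longrightarrow> u z = 0" "z < 0"
  shows "dconv_pow u j z = 0"
  using assms(2)
proof (induction j arbitrary: z)
  case (Suc j)
  have "(\<lambda>y. u (z - y) * dconv_pow u j y) = (\<lambda>_. 0)"
  proof
    fix y
    show "u (z - y) * dconv_pow u j y = 0"
      using Suc assms(1)[of "z - y"] by (cases "y < 0") auto
  qed
  then show ?case
    by simp
qed simp

lemma dconv_pow_eq_fps_power_nth:
  fixes R :: "'a::real_algebra_1 fps"
  assumes u_neg: "\<And>z. z < 0 \<Longrightarrow> u z = 0" and R: "\<And>k. R $ k = of_real (u (int k))"
  shows "of_real (dconv_pow u j (int k)) = (R ^ j) $ k"
proof (induction j arbitrary: k)
  case (Suc j)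
  let ?f = "\<lambda>y. u (int k - y) * dconv_pow u j y"
  have "?f y = 0" if "y \<notin> int ` {0..k}" for y
  proof (cases "y < 0")
    case False
    with that have "int k - y < 0"
      by (cases y) (auto simp: image_iff)
    then show ?thesis by (simp add: u_neg)
  qed (simp add: dconv_pow_eq_0_if_neg[OF u_neg])
  then have "dconv_pow u (Suc j) (int k) = infsum ?f (int ` {0..k})"
    by (simp only: dconv_pow.simps) (rule infsum_cong_neutral; auto)
  also have "\<dots> = (\<Sum>i=0..k. u (int k - int i) * dconv_pow u j (int i))"
    by (simp add: sum.reindex)
  finally have "of_real (dconv_pow u (Suc j) (int k)) = (\<Sum>i=0..k. (R ^ j) $ i * R $ (k - i))"
    by (auto simp: Suc R mult.commute intro!: sum.cong)
  also have "\<dots> = (R ^ Suc j) $ k"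
    by (simp add: power_Suc2 fps_mult_nth del: power_Suc)
  finally show ?case .
qed simp

lemma gamma_seq_eq_fps_inverse_nth:
  fixes f :: "'a::real_field fps"
  assumes "\<And>z. z < 0 \<Longrightarrow> u z = 0" "f $ 0 \<noteq> 0"
    and "\<And>k. (1 - fps_const (inverse (f $ 0)) * f) $ k = of_real (u (int k))"
  shows "of_real (gamma_seq u (int k)) = f $ 0 * inverse f $ k"
proof -
  have "of_real (gamma_seq u (int k)) = (\<Sum>j\<le>k. ((1 - fps_const (inverse (f $ 0)) * f) ^ j) $ k)"
    by (simp add: gamma_seq_def atLeast0AtMost dconv_pow_eq_fps_power_nth[OF assms(1,3)])
  also have "\<dots> = f $ 0 * inverse f $ k"
    using fps_inverse_nth_eq_truncated_geometric[OF assms(2) order_refl] assms(2) by simp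
  finally show ?thesis .
qed

section \<open>Total variation and limits of the partial sums\<close>

lemma lattice_point_le_m_tA:
  assumes "t * real k \<in> A"
  shows "ereal (real k) \<le> m_tA t A"
  unfolding m_tA_def by (rule Sup_upper) (use assms in \<open>auto intro!: image_eqI[of _ _ "int k"]\<close>)

lemma finite_lattice_points_if_m_tA_finite:
  assumes "m_tA t A < \<infinity>"
  shows "finite {k. t * real k \<in> A}"
proof -
  obtain r where r: "m_tA t A \<le> ereal r"
    using assms by (cases "m_tA t A") auto
  have "{k. t * real k \<in> A} \<subseteq> {..nat \<lceil>r\<rceil>}"
  proof
    fix k assume "k \<in> {k. t * real k \<in> A}"
    then have "real k \<le> r"
      using order.trans[OF lattice_point_le_m_tA r] by simp
    then show "k \<in> {..nat \<lceil>r\<rceil>}"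
      by (simp add: le_nat_iff ceiling_le_iff le_ceiling_iff)
  qed
  then show ?thesis
    by (rule finite_subset) simp
qed

lemma total_variation_le_finite_sum:
  fixes f :: "real set \<Rightarrow> complex" and c :: "nat \<Rightarrow> complex"
  assumes "finite K"
    and f: "\<And>B. B \<in> sets borel \<Longrightarrow> B \<subseteq> A \<Longrightarrow> f B = (\<Sum>k\<in>K. c k * of_real (indicator B (x k)))"
  shows "total_variation f A \<le> ennreal (\<Sum>k\<in>K. norm (c k))"
  unfolding total_variation_def
proof (rule SUP_least, safe)
  fix B :: "nat \<Rightarrow> real set"
  assume disjoint: "disjoint_family B" and B: "range B \<subseteq> sets borel" and A: "A = (\<Union>i. B i)"
  have "ennreal (norm (f (B i))) \<le> (\<Sum>k\<in>K. ennreal (norm (c k)) * indicator (B i) (x k))" for i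
  proof -
    have "norm (f (B i)) \<le> (\<Sum>k\<in>K. norm (c k * of_real (indicator (B i) (x k))))"
      using B A by (simp add: f norm_sum UN_upper image_subset_iff)
    also have "\<dots> = (\<Sum>k\<in>K. norm (c k) * indicator (B i) (x k))"
      by (intro sum.cong) (auto simp: norm_mult indicator_def)
    finally have "ennreal (norm (f (B i))) \<le> ennreal (\<Sum>k\<in>K. norm (c k) * indicator (B i) (x k))"
      by (rule ennreal_leI)
    then show ?thesis
      by (simp add: ennreal_mult ennreal_indicator flip: sum_ennreal)
  qed
  then have "(\<Sum>i. ennreal (norm (f (B i)))) \<le> (\<Sum>i. \<Sum>k\<in>K. ennreal (norm (c k)) * indicator (B i) (x k))"
    by (intro suminf_le) auto
  also have "\<dots> = (\<Sum>k\<in>K. ennreal (norm (c k)) * indicator A (x k))"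
    using suminf_indicator[OF disjoint] by (simp add: A suminf_sum)
  also have "\<dots> \<le> (\<Sum>k\<in>K. ennreal (norm (c k)))"
    by (intro sum_mono) (auto simp: indicator_def)
  finally show "(\<Sum>i. ennreal (norm (f (B i)))) \<le> ennreal (\<Sum>k\<in>K. norm (c k))"
    by (simp flip: sum_ennreal)
qed

lemma total_variation_Pi_meas_bounded:
  assumes "t \<noteq> 0" "on_lattice t (pi_meas \<eta> \<mu>)" "norm (lattice_fps t (pi_meas \<eta> \<mu>) $ 0) < 1"
    and "finite {k. t * real k \<in> A}"
  shows "(SUP m. total_variation (\<lambda>B. Pi_meas \<eta> \<mu> B m) A) < \<infinity>"
proof -
  define Q where "Q = lattice_fps t (pi_meas \<eta> \<mu>)"
  define K where "K = {k. t * real k \<in> A}"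
  have "total_variation (\<lambda>B. Pi_meas \<eta> \<mu> B m) A \<le> ennreal (\<Sum>k\<in>K. \<Sum>l. norm ((Q ^ l) $ k))" for m
  proof -
    have "total_variation (\<lambda>B. Pi_meas \<eta> \<mu> B m) A \<le> ennreal (\<Sum>k\<in>K. norm (\<Sum>l\<le>m. (Q ^ l) $ k))"
      using assms unfolding Q_def K_def
      by (intro total_variation_le_finite_sum[where x = "\<lambda>k. t * real k"] Pi_meas_eq_lattice_sum) auto
    also have "\<dots> \<le> ennreal (\<Sum>k\<in>K. \<Sum>l. norm ((Q ^ l) $ k))"
    proof (intro ennreal_leI sum_mono)
      fix k
      have "norm (\<Sum>l\<le>m. (Q ^ l) $ k) \<le> (\<Sum>l\<le>m. norm ((Q ^ l) $ k))"
        by (rule norm_sum)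
      also have "\<dots> \<le> (\<Sum>l. norm ((Q ^ l) $ k))"
        using summable_norm_fps_power_nth[of Q] assms(3) by (intro sum_le_suminf) (auto simp: Q_def)
      finally show "norm (\<Sum>l\<le>m. (Q ^ l) $ k) \<le> (\<Sum>l. norm ((Q ^ l) $ k))" .
    qed
    finally show ?thesis .
  qed
  then have "(SUP m. total_variation (\<lambda>B. Pi_meas \<eta> \<mu> B m) A) \<le> ennreal (\<Sum>k\<in>K. \<Sum>l. norm ((Q ^ l) $ k))"
    by (rule SUP_least)
  then show ?thesis
    using ennreal_less_top by (simp add: le_less_trans)
qed

lemma Pi_meas_tendsto_lattice_sum:
  assumes "t \<noteq> 0" "on_lattice t (pi_meas \<eta> \<mu>)" "norm (lattice_fps t (pi_meas \<eta> \<mu>) $ 0) < 1"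
    and "A \<in> sets borel" "finite {k. t * real k \<in> A}"
  shows "(\<lambda>m. Pi_meas \<eta> \<mu> A m) \<longlonglongrightarrow> (\<Sum>k | t * real k \<in> A. inverse (1 - lattice_fps t (pi_meas \<eta> \<mu>)) $ k)"
proof -
  define Q where "Q = lattice_fps t (pi_meas \<eta> \<mu>)"
  have "Pi_meas \<eta> \<mu> A m = (\<Sum>k | t * real k \<in> A. \<Sum>l\<le>m. (Q ^ l) $ k)" for m
    using assms Pi_meas_eq_lattice_sum[of t \<eta> \<mu> A "{k. t * real k \<in> A}" m]
    by (simp add: Q_def)
  moreover have "(\<lambda>m. \<Sum>l\<le>m. (Q ^ l) $ k) \<longlonglongrightarrow> inverse (1 - Q) $ k" for k
    using fps_power_nth_sums_inverse[of Q k] assms(3) by (simp add: Q_def sums_def_le)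
  ultimately show ?thesis
    by (simp add: Q_def tendsto_sum)
qed

lemma
  fixes \<mu> :: "real measure" and p :: "nat \<Rightarrow> real"
  assumes "t \<noteq> 0" "return borel (- z\<^sub>0) \<star> \<mu> = lattice_measure t p"
    and "\<And>k. 0 \<le> p k" "summable p" "0 < p 0" "p 0 < 2"
    and "A \<in> sets borel" "finite {k. t * real k \<in> A}"
  shows total_variation_Pi_meas_shifted_dirac_bounded:
      "(SUP m. total_variation (\<lambda>B. Pi_meas (cm_dirac (- z\<^sub>0)) \<mu> B m) A) < \<infinity>"
    and Pi_meas_shifted_dirac_tendsto:
      "(\<lambda>m. Pi_meas (cm_dirac (- z\<^sub>0)) \<mu> A m) \<longlonglongrightarrow> (\<Sum>k | t * real k \<in> A. inverse (weights_fps p) $ k)"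
proof -
  note pi_on_lattice = on_lattice_pi_meas_shifted_dirac[OF assms(1-4), of 1, simplified]
  note pi_fps = lattice_fps_pi_meas_shifted_dirac[OF assms(1-4), of 1, simplified]
  have "lattice_fps t (pi_meas (cm_dirac (- z\<^sub>0)) \<mu>) $ 0 = of_real (1 - p 0)"
    using pi_fps by (simp add: weights_fps_def)
  then have "norm (lattice_fps t (pi_meas (cm_dirac (- z\<^sub>0)) \<mu>) $ 0) < 1"
    using assms(5,6) by (simp only: norm_of_real)
  then show "(SUP m. total_variation (\<lambda>B. Pi_meas (cm_dirac (- z\<^sub>0)) \<mu> B m) A) < \<infinity>"
    and "(\<lambda>m. Pi_meas (cm_dirac (- z\<^sub>0)) \<mu> A m) \<longlonglongrightarrow> (\<Sum>k | t * real k \<in> A. inverse (weights_fps p) $ k)"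
    using total_variation_Pi_meas_bounded[OF assms(1) pi_on_lattice _ assms(8)]
      Pi_meas_tendsto_lattice_sum[OF assms(1) pi_on_lattice _ assms(7,8)]
    by (simp_all add: pi_fps)
qed

lemma Pi_meas_scaled_shifted_dirac_eq_lattice_sum:
  fixes \<mu> :: "real measure" and p :: "nat \<Rightarrow> real"
  assumes "t \<noteq> 0" "return borel (- z\<^sub>0) \<star> \<mu> = lattice_measure t p"
    and "\<And>k. 0 \<le> p k" "summable p" "p 0 \<noteq> 0"
    and "A \<in> sets borel" "finite {k. t * real k \<in> A}" "\<And>k. t * real k \<in> A \<Longrightarrow> k \<le> m\<^sub>0"
  shows "of_real (1 / p 0) * Pi_meas (cm_scale (of_real (1 / p 0)) (cm_dirac (- z\<^sub>0))) \<mu> A m\<^sub>0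
    = (\<Sum>k | t * real k \<in> A. inverse (weights_fps p) $ k)"
proof -
  define c :: complex where "c = of_real (1 / p 0)"
  define R where "R = 1 - fps_const c * weights_fps p"
  have c: "c = inverse (weights_fps p $ 0)"
    by (simp add: c_def weights_fps_def divide_inverse)
  have "lattice_fps t (pi_meas (cm_scale c (cm_dirac (- z\<^sub>0))) \<mu>) = R"
    unfolding R_def by (rule lattice_fps_pi_meas_shifted_dirac[OF assms(1-4)])
  then have "Pi_meas (cm_scale c (cm_dirac (- z\<^sub>0))) \<mu> A m\<^sub>0
      = (\<Sum>k | t * real k \<in> A. (\<Sum>l\<le>m\<^sub>0. (R ^ l) $ k) * of_real (indicator A (t * real k)))"
    using Pi_meas_eq_lattice_sum[OF assms(1) on_lattice_pi_meas_shifted_dirac[OF assms(1-4)]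
        assms(6,7) order_refl]
    by simp
  also have "\<dots> = (\<Sum>k | t * real k \<in> A. \<Sum>l\<le>m\<^sub>0. (R ^ l) $ k)"
    by (intro sum.cong) auto
  finally have "c * Pi_meas (cm_scale c (cm_dirac (- z\<^sub>0))) \<mu> A m\<^sub>0
      = (\<Sum>k | t * real k \<in> A. c * (\<Sum>l\<le>m\<^sub>0. (R ^ l) $ k))"
    by (simp add: sum_distrib_left)
  also have "\<dots> = (\<Sum>k | t * real k \<in> A. inverse (weights_fps p) $ k)"
  proof (intro sum.cong refl)
    fix k assume "k \<in> {k. t * real k \<in> A}"
    then show "c * (\<Sum>l\<le>m\<^sub>0. (R ^ l) $ k) = inverse (weights_fps p) $ k"
      using fps_inverse_nth_eq_truncated_geometric[of "weights_fps p" k m\<^sub>0] assms(5,8)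
      by (simp add: R_def c weights_fps_def)
  qed
  finally show ?thesis
    by (simp only: c_def)
qed

lemma gamma_seq_lattice_sum:
  fixes p :: "nat \<Rightarrow> real"
  assumes "p 0 \<noteq> 0" "\<And>z. z < 0 \<Longrightarrow> u z = 0" "\<And>k. u (int k) = (if k = 0 then 1 else 0) - p k / p 0"
    and "finite {k. t * real k \<in> A}"
  shows "of_real (1 / p 0) * (\<Sum>k. complex_of_real (gamma_seq u (int k) * indicator A (t * real k)))
    = (\<Sum>k | t * real k \<in> A. inverse (weights_fps p) $ k)"
proof -
  have gamma: "of_real (gamma_seq u (int k)) = of_real (p 0) * inverse (weights_fps p) $ k" for k
    using gamma_seq_eq_fps_inverse_nth[of u "weights_fps p" k] assms(1-3)
    by (simp add: weights_fps_def field_simps)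
  have "(\<Sum>k. complex_of_real (gamma_seq u (int k) * indicator A (t * real k)))
      = (\<Sum>k | t * real k \<in> A. of_real (gamma_seq u (int k)))"
    using assms(4) by (subst suminf_finite) auto
  then show ?thesis
    using assms(1) by (simp add: gamma sum_distrib_left)
qed

lemma Pi_meas_shifted_dirac_lattice:
  fixes \<mu> :: "real measure" and p :: "nat \<Rightarrow> real" and u :: "int \<Rightarrow> real"
  assumes "t \<noteq> 0" "return borel (- z\<^sub>0) \<star> \<mu> = lattice_measure t p"
    and "\<And>k. 0 \<le> p k" "summable p" "0 < p 0" "p 0 < 2"
    and "\<And>z. z < 0 \<Longrightarrow> u z = 0" "\<And>k. u (int k) = (if k = 0 then 1 else 0) - p k / p 0"
    and "A \<in> sets borel" "m_tA t A < \<infinity>"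
  shows "(SUP m. total_variation (\<lambda>B. Pi_meas (cm_dirac (- z\<^sub>0)) \<mu> B m) A) < \<infinity>
    \<and> (\<forall>m\<^sub>0::nat. ereal (real m\<^sub>0) \<ge> m_tA t A \<longrightarrow>
        (\<lambda>m. Pi_meas (cm_dirac (- z\<^sub>0)) \<mu> A m)
          \<longlonglongrightarrow> of_real (1 / p 0) * Pi_meas (cm_scale (of_real (1 / p 0)) (cm_dirac (- z\<^sub>0))) \<mu> A m\<^sub>0
      \<and> of_real (1 / p 0) * Pi_meas (cm_scale (of_real (1 / p 0)) (cm_dirac (- z\<^sub>0))) \<mu> A m\<^sub>0
        = of_real (1 / p 0) * (\<Sum>z. complex_of_real (gamma_seq u (int z) * indicator A (t * real z))))"
    (is "?bounded \<and> (\<forall>m\<^sub>0. _ \<longrightarrow> ?limit m\<^sub>0 \<and> ?truncated m\<^sub>0)")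
proof (intro conjI allI impI)
  have K: "finite {k. t * real k \<in> A}"
    by (rule finite_lattice_points_if_m_tA_finite[OF assms(10)])
  show ?bounded
    by (rule total_variation_Pi_meas_shifted_dirac_bounded[OF assms(1-6,9) K])
  fix m\<^sub>0 :: nat
  assume m\<^sub>0: "m_tA t A \<le> ereal (real m\<^sub>0)"
  have "k \<le> m\<^sub>0" if "t * real k \<in> A" for k
    using order.trans[OF lattice_point_le_m_tA[OF that] m\<^sub>0] by simp
  \<comment> \<open>The limit, the truncated sum and the \<open>gamma_seq\<close> series all equal the sum of the
    coefficients of \<open>inverse (weights_fps p)\<close> at the lattice points of \<open>A\<close>.\<close>
  then show "?limit m\<^sub>0" and "?truncated m\<^sub>0"
    using Pi_meas_shifted_dirac_tendsto[OF assms(1-6,9) K]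
      Pi_meas_scaled_shifted_dirac_eq_lattice_sum[OF assms(1-4) _ assms(9) K]
      gamma_seq_lattice_sum[OF _ assms(7,8) K] assms(5)
    by simp_all
qed

theorem theorem3:
  fixes P :: "'a measure" and \<epsilon> :: "'a \<Rightarrow> real"
    and z\<^sub>0 t :: real and A :: "real set"
  assumes "prob_space P"
    and "\<epsilon> \<in> borel_measurable P"
    and "t > 0"
    and "measure P {\<omega> \<in> space P. \<epsilon> \<omega> \<in> {z\<^sub>0 + t * real z | z. True}} = 1"
    and "measure (distr P borel \<epsilon>) {z\<^sub>0} > 0"
    and "A \<in> sets borel"
    and "m_tA t A < \<infinity>"
  shows
    "(let \<mu>\<epsilon> = distr P borel \<epsilon>;
          F = (\<lambda>x. measure \<mu>\<epsilon> {x});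
          lam = 1 / F z\<^sub>0;
          u = (\<lambda>z::int. (if z = 0 then 1 else 0) - lam * F (z\<^sub>0 + t * real_of_int z))
      in (SUP m. total_variation (\<lambda>B. Pi_meas (cm_dirac (- z\<^sub>0)) \<mu>\<epsilon> B m) A) < \<infinity>
       \<and> (\<forall>m\<^sub>0::nat. ereal (real m\<^sub>0) \<ge> m_tA t A \<longrightarrow>
            (\<lambda>m. Pi_meas (cm_dirac (- z\<^sub>0)) \<mu>\<epsilon> A m)
              \<longlonglongrightarrow> complex_of_real lam * Pi_meas (cm_scale (complex_of_real lam) (cm_dirac (- z\<^sub>0))) \<mu>\<epsilon> A m\<^sub>0
          \<and> complex_of_real lam * Pi_meas (cm_scale (complex_of_real lam) (cm_dirac (- z\<^sub>0))) \<mu>\<epsilon> A m\<^sub>0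
            = complex_of_real lam * (\<Sum>z. complex_of_real (gamma_seq u (int z) * indicator A (t * real z)))))"
proof -
  define \<mu> where "\<mu> = distr P borel \<epsilon>"
  define p where "p = (\<lambda>k. measure \<mu> {z\<^sub>0 + t * real k})"
  define u where "u z = (if z = 0 then 1 else 0) - 1 / p 0 * measure \<mu> {z\<^sub>0 + t * real_of_int z}"
    for z :: int
  have t: "t \<noteq> 0"
    using assms(3) by simp
  note lattice = shifted_distr_eq_lattice_measure[OF assms(1,2) t assms(4), folded \<mu>_def, folded p_def]
    summable_distr_lattice_points[OF assms(1,2) t assms(4), folded \<mu>_def, folded p_def]
  have "measure \<mu> {z\<^sub>0} \<le> 1"
    unfolding \<mu>_def using assms(2) by (intro prob_space.prob_le_1 prob_space.prob_space_distr assms(1))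
  then have p: "\<And>k. 0 \<le> p k" "0 < p 0" "p 0 < 2"
    using assms(5) by (auto simp: p_def \<mu>_def)
  have u: "u z = 0" if "z < 0" for z
    using measure_distr_below_lattice[OF assms(1,2) t assms(4) that] that by (simp add: u_def \<mu>_def)
  have u_lattice: "u (int k) = (if k = 0 then 1 else 0) - p k / p 0" for k
    by (simp add: u_def p_def)
  have lam: "1 / measure \<mu> {z\<^sub>0} = 1 / p 0"
    by (simp add: p_def)
  show ?thesis
    unfolding Let_def \<mu>_def[symmetric] u_def[abs_def, symmetric] lam
    by (rule Pi_meas_shifted_dirac_lattice[OF t lattice(1) p(1) lattice(2) p(2,3) u u_lattice assms(6,7)])
qed

end
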